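(* (1) For every $\mathtt{dCBN}$ term $M$: $\mathcal T^n(M)=\mathcal T(M^n)$. (2) For every $\mathtt{dCBV}$ term $M$: $\mathcal T^v(M)=\mathcal T(M^v)$.
   Context: \textbf{dBang and translations.} $\mathtt{dBang}$ terms: $M ::= x\mid\lambda x.M\mid MN\mid M[N/x]\mid\ !M\mid\mathrm{der}\,M$. $\mathtt{dCBN}$/$\mathtt{dCBV}$ terms: $M::=x\mid\lambda x.M\mid MN\mid M[N/x]$; values $V::=x\mid\lambda x.M$; list contexts $L::=\square\mid L[N/x]$. $x^n=x$, $(\lambda x.M)^n=\lambda x.M^n$, $(MN)^n=M^n\,!N^n$, $(M[N/x])^n=M^n[!N^n/x]$. $x^v=!x$, $(\lambda x.M)^v=!(\lambda x.M^v)$, $(MN)^v=L\langle P\rangle N^v$ if $M^v=L\langle !P\rangle$ for a list context $L$, else $(MN)^v=\mathrm{der}(M^v)\,N^v$; $(M[N/x])^v=M^v[N^v/x]$. \textbf{Resource terms} $m,n::=x\mid\lambda x.m\mid mn\mid m[n/x]\mid\mathrm{der}\,m\mid[m_1,\dots,m_k]$ ($k\ge0$ multisets); resource list contexts $l::=\square\mid l[n/x]$. \textbf{dBang approximation:} $x\sqsubset x$; $\lambda x.m\sqsubset\lambda x.M$ if $m\sqsubset M$; $mn\sqsubset MN$ and $m[n/x]\sqsubset M[N/x]$ if $m\sqsubset M,n\sqsubset N$; $\mathrm{der}\,m\sqsubset\mathrm{der}\,M$ if $m\sqsubset M$; $[m_1,\dots,m_k]\sqsubset\ !M$ ($k\ge0$)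 if all $m_i\sqsubset M$. $\mathcal T(M)=\{m\mid m\sqsubset M\}$. \textbf{dCBN approximation} $\sqsubset_n$: $x\sqsubset_n x$; $\lambda x.m\sqsubset_n\lambda x.M$ if $m\sqsubset_n M$; $m[n_1,\dots,n_k]\sqsubset_n MN$ and $m[[n_1,\dots,n_k]/x]\sqsubset_n M[N/x]$ ($k\ge0$) if $m\sqsubset_n M$ and all $n_i\sqsubset_n N$. $\mathcal T^n(M)=\{m\mid m\sqsubset_n M\}$. \textbf{dCBV approximation} $\sqsubset_v$: $[x,\dots,x]\sqsubset_v x$ ($k\ge0$ copies); $[\lambda x.m_1,\dots,\lambda x.m_k]\sqsubset_v\lambda x.M$ ($k\ge0$) if all $m_i\sqsubset_v M$; $\mathrm{der}(m)\,n\sqsubset_v MN$ if $m\sqsubset_v M$, $n\sqsubset_v N$ and $M$ is not of the form $L\langle V\rangle$ with $V$ a value; $l\langle m\rangle n\sqsubset_v L\langle V\rangle N$ if $V$ is a value, $[m]\sqsubset_v V$, $n\sqsubset_v N$, and $l=\square[p_1/y_1]\cdots[p_j/y_j]$ with $L=\square[P_1/y_1]\cdots[P_j/y_j]$ and $p_i\sqsubset_v P_i$; $m[n/x]\sqsubset_v M[N/x]$ if $m\sqsubset_v M$, $n\sqsubset_v N$. $\mathcal T^v(M)=\{m\mid m\sqsubset_v M\}$. *)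

theory Defs
  imports Main "HOL-Library.Multiset"
begin

type_synonym var = string

datatype bterm =
    BVar var
  | BLam var bterm
  | BApp bterm bterm
  | BES bterm var bterm   (* BES M x N  =  M[N/x] *)
  | BBang bterm
  | BDer bterm

text \<open>dCBN / dCBV terms (shared syntax)\<close>
datatype lterm =
    Var var
  | Lam var lterm
  | App lterm lterm
  | ES lterm var lterm    (* ES M x N  =  M[N/x] *)

datatype rterm =
    RVar var
  | RLam var rterm
  | RApp rterm rterm
  | RES rterm var rterm   (* RES m x n = m[n/x] *)
  | RDer rterm
  | RBag "rterm multiset"

text \<open>List contexts L = box[P1/y1]...[Pj/yj], represented as [(y1,P1),...,(yj,Pj)]\<close>
definition bplug :: "(var \<times> bterm) list \<Rightarrow> bterm \<Rightarrow> bterm" where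
  "bplug L P = foldl (\<lambda>t (y, N). BES t y N) P L"

definition lplug :: "(var \<times> lterm) list \<Rightarrow> lterm \<Rightarrow> lterm" where
  "lplug L P = foldl (\<lambda>t (y, N). ES t y N) P L"

definition rplug :: "(var \<times> rterm) list \<Rightarrow> rterm \<Rightarrow> rterm" where
  "rplug l p = foldl (\<lambda>t (y, n). RES t y n) p l"

fun unbang :: "bterm \<Rightarrow> ((var \<times> bterm) list \<times> bterm) option" where
  "unbang (BBang P) = Some ([], P)"
| "unbang (BES M x N) = map_option (\<lambda>(L, P). (L @ [(x, N)], P)) (unbang M)"
| "unbang _ = None"

fun is_value :: "lterm \<Rightarrow> bool" where
  "is_value (Var x) = True"
| "is_value (Lam x M) = True"
| "is_value _ = False"

fun trn :: "lterm \<Rightarrow> bterm" where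
  "trn (Var x) = BVar x"
| "trn (Lam x M) = BLam x (trn M)"
| "trn (App M N) = BApp (trn M) (BBang (trn N))"
| "trn (ES M x N) = BES (trn M) x (BBang (trn N))"

fun trv :: "lterm \<Rightarrow> bterm" where
  "trv (Var x) = BBang (BVar x)"
| "trv (Lam x M) = BBang (BLam x (trv M))"
| "trv (App M N) = (case unbang (trv M) of
      Some (L, P) \<Rightarrow> BApp (bplug L P) (trv N)
    | None \<Rightarrow> BApp (BDer (trv M)) (trv N))"
| "trv (ES M x N) = BES (trv M) x (trv N)"

inductive approx :: "rterm \<Rightarrow> bterm \<Rightarrow> bool" where
  "approx (RVar x) (BVar x)"
| "approx m M \<Longrightarrow> approx (RLam x m) (BLam x M)"
| "approx m M \<Longrightarrow> approx n N \<Longrightarrow> approx (RApp m n) (BApp M N)"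
| "approx m M \<Longrightarrow> approx n N \<Longrightarrow> approx (RES m x n) (BES M x N)"
| "approx m M \<Longrightarrow> approx (RDer m) (BDer M)"
| "(\<forall>m\<in>#ms. approx m M) \<Longrightarrow> approx (RBag ms) (BBang M)"

definition T :: "bterm \<Rightarrow> rterm set" where
  "T M = {m. approx m M}"

inductive approx_n :: "rterm \<Rightarrow> lterm \<Rightarrow> bool" where
  "approx_n (RVar x) (Var x)"
| "approx_n m M \<Longrightarrow> approx_n (RLam x m) (Lam x M)"
| "approx_n m M \<Longrightarrow> (\<forall>n\<in>#ns. approx_n n N) \<Longrightarrow> approx_n (RApp m (RBag ns)) (App M N)"
| "approx_n m M \<Longrightarrow> (\<forall>n\<in>#ns. approx_n n N) \<Longrightarrow> approx_n (RES m x (RBag ns)) (ES M x N)"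

definition Tn :: "lterm \<Rightarrow> rterm set" where
  "Tn M = {m. approx_n m M}"

inductive approx_v :: "rterm \<Rightarrow> lterm \<Rightarrow> bool" where
  "(\<forall>m\<in>#ms. m = RVar x) \<Longrightarrow> approx_v (RBag ms) (Var x)"
| "(\<forall>m\<in>#ms. \<exists>m'. m = RLam x m' \<and> approx_v m' M) \<Longrightarrow> approx_v (RBag ms) (Lam x M)"
| "approx_v m M \<Longrightarrow> approx_v n N \<Longrightarrow> \<not> (\<exists>L V. is_value V \<and> M = lplug L V)
     \<Longrightarrow> approx_v (RApp (RDer m) n) (App M N)"
| "is_value V \<Longrightarrow> approx_v (RBag {#m#}) V \<Longrightarrow> approx_v n N
     \<Longrightarrow> length ys = length ps \<Longrightarrow> list_all2 approx_v ps Ps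
     \<Longrightarrow> approx_v (RApp (rplug (zip ys ps) m) n) (App (lplug (zip ys Ps) V) N)"
| "approx_v m M \<Longrightarrow> approx_v n N \<Longrightarrow> approx_v (RES m x n) (ES M x N)"

definition Tv :: "lterm \<Rightarrow> rterm set" where
  "Tv M = {m. approx_v m M}"

end

theory Submission
  imports Defs
begin

(* The only interesting case is a CBV application whose head is a value V below a
   list of explicit substitutions L.  Writing trv V = !P, the head of its translation is L<P>
   with the substitutions of L translated, whose approximants are exactly the l<p> with p
   approximating P; this is the shape of the fourth rule of CBV approximation, because the
   decomposition of the head as L<V> with V a value is unique. *)

inductive_simps approx_BVar_iff: "approx m (BVar x)"
inductive_simps approx_BLam_iff: "approx m (BLam x M)"
inductive_simps approx_BApp_iff: "approx m (BApp M N)"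
inductive_simps approx_BES_iff: "approx m (BES M x N)"
inductive_simps approx_BDer_iff: "approx m (BDer M)"
inductive_simps approx_BBang_iff: "approx m (BBang M)"

lemmas approx_simps =
  approx_BVar_iff approx_BLam_iff approx_BApp_iff approx_BES_iff approx_BDer_iff approx_BBang_iff

inductive_simps approx_n_Var_iff: "approx_n m (Var x)"
inductive_simps approx_n_Lam_iff: "approx_n m (Lam x M)"
inductive_simps approx_n_App_iff: "approx_n m (App M N)"
inductive_simps approx_n_ES_iff: "approx_n m (ES M x N)"

inductive_simps approx_v_Var_iff: "approx_v m (Var x)"
inductive_simps approx_v_Lam_iff: "approx_v m (Lam x M)"
inductive_simps approx_v_App_iff: "approx_v m (App M N)"
inductive_simps approx_v_ES_iff: "approx_v m (ES M x N)"

lemma approx_n_iff_approx_trn: "approx_n m M \<longleftrightarrow> approx m (trn M)"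
  by (induction M arbitrary: m)
    (auto simp: approx_simps approx_n_Var_iff approx_n_Lam_iff approx_n_App_iff approx_n_ES_iff)

lemma lplug_Nil [simp]: "lplug [] V = V"
  and bplug_Nil [simp]: "bplug [] P = P"
  and rplug_Nil [simp]: "rplug [] p = p"
  by (simp_all add: lplug_def bplug_def rplug_def)

lemma lplug_snoc [simp]: "lplug (L @ [(y, Q)]) V = ES (lplug L V) y Q"
  and bplug_snoc [simp]: "bplug (L' @ [(y, Q')]) P = BES (bplug L' P) y Q'"
  and rplug_snoc [simp]: "rplug (l @ [(y, q)]) p = RES (rplug l p) y q"
  by (simp_all add: lplug_def bplug_def rplug_def)

lemma trv_lplug: "trv (lplug L V) = bplug (map (apsnd trv) L) (trv V)"
  by (induction L rule: rev_induct) auto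

lemma unbang_bplug_BBang: "unbang (bplug L (BBang P)) = Some (L, P)"
  by (induction L rule: rev_induct) auto

lemma trv_value_eq_BBang: "is_value V \<Longrightarrow> \<exists>P. trv V = BBang P"
  by (cases V) auto

lemma lplug_value_of_unbang_trv:
  "unbang (trv M) = Some (L', P) \<Longrightarrow> \<exists>L V. is_value V \<and> M = lplug L V"
proof (induction M arbitrary: L')
  case (Var x)
  then show ?case by (intro exI[of _ "[]"] exI[of _ "Var x"]) auto
next
  case (Lam x M)
  then show ?case by (intro exI[of _ "[]"] exI[of _ "Lam x M"]) auto
next
  case (App M N)
  then show ?case by (auto split: option.splits)
next
  case (ES M x N)
  then obtain L0 where "unbang (trv M) = Some (L0, P)" by auto
  with ES.IH obtain L V where "is_value V" "M = lplug L V" by blast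
  then show ?case by (intro exI[of _ "L @ [(x, N)]"] exI[of _ V]) auto
qed

lemma lplug_value_inject:
  "is_value V \<Longrightarrow> is_value V' \<Longrightarrow> lplug L V = lplug L' V' \<Longrightarrow> L = L' \<and> V = V'"
proof (induction L arbitrary: L' rule: rev_induct)
  case Nil
  then show ?case by (cases L' rule: rev_exhaust; cases V; auto)
next
  case (snoc a L)
  then show ?case by (cases L' rule: rev_exhaust; cases V'; cases a; auto)
qed

lemma size_lplug_le: "size V \<le> size (lplug L V)"
  by (induction L rule: rev_induct) auto

lemma size_lplug_less: "(y, Q) \<in> set L \<Longrightarrow> size Q < size (lplug L V)"
  by (induction L rule: rev_induct) (auto simp: less_SucI trans_less_add1)

lemma approx_bplug_iff:
  "approx m (bplug L P) \<longleftrightarrow>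
    (\<exists>ps p. m = rplug (zip (map fst L) ps) p \<and> list_all2 approx ps (map snd L) \<and> approx p P)"
proof (induction L arbitrary: m rule: rev_induct)
  case Nil
  then show ?case by auto
next
  case (snoc a L)
  obtain y Q where a: "a = (y, Q)" by fastforce
  have "approx m (bplug (L @ [a]) P) \<longleftrightarrow>
      (\<exists>ps p n. m = RES (rplug (zip (map fst L) ps) p) y n \<and>
        list_all2 approx ps (map snd L) \<and> approx p P \<and> approx n Q)"
    by (auto simp: a approx_BES_iff snoc.IH)
  also have "\<dots> \<longleftrightarrow> (\<exists>ps p. m = rplug (zip (map fst (L @ [a])) ps) p \<and>
      list_all2 approx ps (map snd (L @ [a])) \<and> approx p P)"
  proof
    assume "\<exists>ps p n. m = RES (rplug (zip (map fst L) ps) p) y n \<and>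
        list_all2 approx ps (map snd L) \<and> approx p P \<and> approx n Q"
    then obtain ps p n where m: "m = RES (rplug (zip (map fst L) ps) p) y n"
        and approx: "list_all2 approx ps (map snd L)" "approx p P" "approx n Q"
      by blast
    then have "m = rplug (zip (map fst (L @ [a])) (ps @ [n])) p"
      by (simp add: a list_all2_lengthD)
    moreover have "list_all2 approx (ps @ [n]) (map snd (L @ [a]))"
      using approx by (simp add: a list_all2_appendI)
    ultimately show "\<exists>ps p. m = rplug (zip (map fst (L @ [a])) ps) p \<and>
        list_all2 approx ps (map snd (L @ [a])) \<and> approx p P"
      using approx(2) by blast
  next
    assume "\<exists>ps p. m = rplug (zip (map fst (L @ [a])) ps) p \<and>
        list_all2 approx ps (map snd (L @ [a])) \<and> approx p P"
    then obtain ps n p where "m = rplug (zip (map fst (L @ [a])) (ps @ [n])) p"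
        "list_all2 approx ps (map snd L)" "approx n Q" "approx p P"
      by (auto simp: a list_all2_append2 list_all2_Cons2)
    then show "\<exists>ps p n. m = RES (rplug (zip (map fst L) ps) p) y n \<and>
        list_all2 approx ps (map snd L) \<and> approx p P \<and> approx n Q"
      by (auto simp: a list_all2_lengthD)
  qed
  finally show ?case .
qed

lemma approx_v_App_lplug_value_iff:
  assumes "is_value V"
  shows "approx_v m (App (lplug L V) N) \<longleftrightarrow>
    (\<exists>ps p n. m = RApp (rplug (zip (map fst L) ps) p) n \<and>
      list_all2 approx_v ps (map snd L) \<and> approx_v (RBag {#p#}) V \<and> approx_v n N)"
proof
  assume "approx_v m (App (lplug L V) N)"
  then obtain ys ps Ps V' p n where m: "m = RApp (rplug (zip ys ps) p) n"
    and head: "lplug L V = lplug (zip ys Ps) V'" "is_value V'"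
    and approx: "approx_v (RBag {#p#}) V'" "approx_v n N" "list_all2 approx_v ps Ps"
    and "length ys = length ps"
    using assms by (auto simp: approx_v_App_iff)
  then have "length Ps = length ys"
    by (simp add: list_all2_lengthD)
  moreover have "L = zip ys Ps" "V' = V"
    using lplug_value_inject[OF assms head(2) head(1)] by auto
  ultimately have "ys = map fst L" "Ps = map snd L" "V' = V"
    by auto
  with m approx show "\<exists>ps p n. m = RApp (rplug (zip (map fst L) ps) p) n \<and>
      list_all2 approx_v ps (map snd L) \<and> approx_v (RBag {#p#}) V \<and> approx_v n N"
    by blast
next
  assume "\<exists>ps p n. m = RApp (rplug (zip (map fst L) ps) p) n \<and>
      list_all2 approx_v ps (map snd L) \<and> approx_v (RBag {#p#}) V \<and> approx_v n N"
  then obtain ps p n where m: "m = RApp (rplug (zip (map fst L) ps) p) n"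
    and approx: "list_all2 approx_v ps (map snd L)" "approx_v (RBag {#p#}) V" "approx_v n N"
    by blast
  have "length (map fst L) = length ps"
    using approx(1) by (simp add: list_all2_lengthD)
  with assms approx have "approx_v m (App (lplug (zip (map fst L) (map snd L)) V) N)"
    unfolding m by (intro approx_v.intros(4))
  then show "approx_v m (App (lplug L V) N)"
    by (simp add: zip_map_fst_snd)
qed

lemma approx_trv_App_lplug_value_iff:
  assumes "trv V = BBang P"
  shows "approx m (trv (App (lplug L V) N)) \<longleftrightarrow>
    (\<exists>ps p n. m = RApp (rplug (zip (map fst L) ps) p) n \<and>
      list_all2 approx ps (map (trv \<circ> snd) L) \<and> approx p P \<and> approx n (trv N))"
proof -
  have "trv (App (lplug L V) N) = BApp (bplug (map (apsnd trv) L) P) (trv N)"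
    by (simp add: trv_lplug assms unbang_bplug_BBang)
  then show ?thesis
    by (auto simp: approx_BApp_iff approx_bplug_iff)
qed

lemma approx_v_iff_approx_trv: "approx_v m M \<longleftrightarrow> approx m (trv M)"
proof (induction M arbitrary: m rule: measure_induct_rule[of size])
  case (less M)
  show ?case
  proof (cases M)
    case (Var x)
    then show ?thesis by (auto simp: approx_simps approx_v_Var_iff)
  next
    case (Lam x B)
    then show ?thesis using less.IH[of B] by (auto simp: approx_simps approx_v_Lam_iff)
  next
    case (ES B x N)
    then show ?thesis using less.IH[of B] less.IH[of N] by (auto simp: approx_simps approx_v_ES_iff)
  next
    case (App M' N)
    have IH_N: "approx_v n N \<longleftrightarrow> approx n (trv N)" for n
      using less.IH App by simp
    show ?thesis
    proof (cases "\<exists>L V. is_value V \<and> M' = lplug L V")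
      case True
      then obtain L V where V: "is_value V" and M': "M' = lplug L V" by blast
      obtain P where P: "trv V = BBang P" using trv_value_eq_BBang[OF V] by blast
      have IH_V: "approx_v (RBag {#p#}) V \<longleftrightarrow> approx p P" for p
        using less.IH[of V] size_lplug_le[of V L] App M' P by (simp add: approx_BBang_iff)
      have IH_L: "approx_v q Q \<longleftrightarrow> approx q (trv Q)" if "Q \<in> snd ` set L" for q Q
        using that less.IH size_lplug_less[of _ Q L V] App M' by force
      have "list_all2 approx_v ps (map snd L) \<longleftrightarrow> list_all2 approx ps (map (trv \<circ> snd) L)"
        for ps
        using IH_L by (auto simp: list_all2_conv_all_nth)
      with IH_V IH_N show ?thesis
        unfolding App M' approx_v_App_lplug_value_iff[OF V] approx_trv_App_lplug_value_iff[OF P]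
        by blast
    next
      case False
      then have "unbang (trv M') = None"
        using lplug_value_of_unbang_trv by (cases "unbang (trv M')") fastforce+
      then have "trv M = BApp (BDer (trv M')) (trv N)"
        using App by simp
      moreover have "approx_v a M' \<longleftrightarrow> approx a (trv M')" for a
        using less.IH App by simp
      ultimately show ?thesis
        using App False IH_N by (auto simp: approx_v_App_iff approx_simps)
    qed
  qed
qed

theorem mainTheorem9:
  shows "(\<forall>M. Tn M = T (trn M)) \<and> (\<forall>M. Tv M = T (trv M))"
  by (auto simp: Tn_def Tv_def T_def approx_n_iff_approx_trn approx_v_iff_approx_trv)

end
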